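(* Let $S$ be a left amenable semitopological semigroup, let $E=F^{*}$ be a dual Banach space and let $C\subset E$ be a nonempty weak$^*$-compact set. Let $\{T_s:s\in S\}$ be a representation of $S$ on $C$ such that the family $\{T_s:s\in S\}$ is (as a semigroup under composition) generated by firmly nonexpansive mappings, and such that the map $S\times C\ni(s,x)\mapsto T_sx\in C$ is jointly continuous, where $C$ carries the weak$^*$ topology. Then there is $x\in C$ with $T_sx=x$ for all $s\in S$.
   Context: A semitopological semigroup is a semigroup $S$ with a Hausdorff topology such that $s\mapsto ts$ and $s\mapsto st$ are continuous for each $t\in S$. A representation of $S$ on $C$ is a family of maps $T_s:C\to C$ with $T_{st}x=T_s(T_tx)$ for all $s,t\in S$, $x\in C$. For $f\in\ell^\infty(S)$ let $(l_sf)(t)=f(st)$. $LUC(S)$ is the space of bounded continuous real functions $f$ on $S$ such that $s\mapsto l_sf$ is continuous into $C_b(S)$ with the sup norm. $S$ is left amenable if there is $\mu\in LUC(S)^*$ with $\|\mu\|=\mu(1)=1$ and $\mu(l_sf)=\mu(f)$ for all $s\in S$, $f\in LUC(S)$. A map $T:C\to C$ is firmly nonexpansive if $\|Tx-Ty\|\le\|\alpha(x-y)+(1-\alpha)(Tx-Ty)\|$ for all $x,y\in C$, $\alpha\in(0,1)$ (norm of $E$). *)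

theory Defs
  imports "HOL-Analysis.Analysis"
begin

text \<open>The dual Banach space E = F* is modelled as the type of bounded linear
functionals on F, with its operator (dual) norm.\<close>

definition weak_star_topology :: "('f::real_normed_vector \<Rightarrow>\<^sub>L real) topology" where
  "weak_star_topology =
     topology_generated_by {{x. blinfun_apply x f \<in> U} | f U. open U}"

definition semitopological_semigroup :: "'s::{semigroup_mult, t2_space} itself \<Rightarrow> bool" where
  "semitopological_semigroup _ \<longleftrightarrow>
     (\<forall>t::'s. continuous_on UNIV (\<lambda>s. t * s) \<and> continuous_on UNIV (\<lambda>s. s * t))"

text \<open>LUC(S): bounded continuous real functions f such that s \<mapsto> l_s f is continuous
into C_b(S) with the sup norm, where (l_s f)(t) = f(s t).\<close>

definition LUC :: "('s::{semigroup_mult, topological_space} \<Rightarrow> real) set" where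
  "LUC = {f. continuous_on UNIV f \<and> bounded (range f) \<and>
             (\<forall>s0. \<forall>e>0. \<exists>U. open U \<and> s0 \<in> U \<and>
                 (\<forall>s\<in>U. \<forall>t. \<bar>f (s * t) - f (s0 * t)\<bar> \<le> e))}"

text \<open>Left amenability: a left invariant mean on LUC(S), i.e. a linear functional
\<mu> on LUC(S) with \<parallel>\<mu>\<parallel> = \<mu>(1) = 1 and \<mu>(l_s f) = \<mu>(f).  The norm condition is written
as |\<mu> f| \<le> sup |f| on LUC(S) together with \<mu>(1) = 1 (which forces \<parallel>\<mu>\<parallel> = 1).\<close>

definition left_amenable :: "'s::{semigroup_mult, topological_space} itself \<Rightarrow> bool" where
  "left_amenable _ \<longleftrightarrow>
     (\<exists>\<mu> :: ('s \<Rightarrow> real) \<Rightarrow> real.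
        (\<forall>f\<in>LUC. \<forall>g\<in>LUC. \<forall>a b. \<mu> (\<lambda>t. a * f t + b * g t) = a * \<mu> f + b * \<mu> g) \<and>
        (\<forall>f\<in>LUC. \<bar>\<mu> f\<bar> \<le> (SUP t. \<bar>f t\<bar>)) \<and>
        \<mu> (\<lambda>_. 1) = 1 \<and>
        (\<forall>f\<in>LUC. \<forall>s. \<mu> (\<lambda>t. f (s * t)) = \<mu> f))"

definition firmly_nonexpansive_on :: "'e::real_normed_vector set \<Rightarrow> ('e \<Rightarrow> 'e) \<Rightarrow> bool" where
  "firmly_nonexpansive_on C T \<longleftrightarrow>
     (\<forall>x\<in>C. \<forall>y\<in>C. \<forall>\<alpha>::real. 0 < \<alpha> \<and> \<alpha> < 1 \<longrightarrow>
        norm (T x - T y) \<le> norm (\<alpha> *\<^sub>R (x - y) + (1 - \<alpha>) *\<^sub>R (T x - T y)))"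

text \<open>The semigroup (under composition, no identity adjoined) generated by G.\<close>

inductive_set comp_semigroup :: "('a \<Rightarrow> 'a) set \<Rightarrow> ('a \<Rightarrow> 'a) set" for G where
  gen: "g \<in> G \<Longrightarrow> g \<in> comp_semigroup G"
| comp: "f \<in> comp_semigroup G \<Longrightarrow> g \<in> comp_semigroup G \<Longrightarrow> f \<circ> g \<in> comp_semigroup G"

definition representation_on :: "'e set \<Rightarrow> ('s::semigroup_mult \<Rightarrow> 'e \<Rightarrow> 'e) \<Rightarrow> bool" where
  "representation_on C T \<longleftrightarrow>
     (\<forall>s. \<forall>x\<in>C. T s x \<in> C) \<and> (\<forall>s t. \<forall>x\<in>C. T (s * t) x = T s (T t x))"

end

theory Submission
  imports Defs
begin

(*
  An invariant mean mu on LUC(S) and a base point x0 of C give the state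
  phi h = mu (s |-> h (T s x0)) on the continuous functions of C (weak* topology), and
  phi is invariant under every T s.  Invariance forces phi to be concentrated on each range
  T s ` C; concentration on closed sets survives finite intersections (Urysohn), so
  compactness yields a point x in all the ranges.

  A weak*-compact set is norm bounded (Banach-Steinhaus).  If g is a firmly nonexpansive
  generator, then x lies in every g^n(C), and the limits
  L k = lim_i sup { norm (z - g^k z) | z in g^i(C) }
  form a bounded convex sequence with L 0 = 0, which must therefore be nonincreasing;
  hence norm (x - g x) <= L 1 <= 0.  So x is fixed by the generators, hence by all T s.
*)

section \<open>The weak* topology\<close>

lemma topspace_weak_star_topology [simp]: "topspace weak_star_topology = UNIV"
  unfolding weak_star_topology_def topology_generated_by_topspace
  by (auto intro!: exI[of _ "{x. blinfun_apply x 0 \<in> UNIV}"])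

lemma continuous_map_weak_star_apply:
  "continuous_map weak_star_topology euclideanreal (\<lambda>x. blinfun_apply x f)"
  unfolding continuous_map
proof (intro conjI allI impI)
  fix U :: "real set"
  assume "openin euclideanreal U"
  then have "{x. blinfun_apply x f \<in> U} \<in> {{x. blinfun_apply x f \<in> U} | f U. open U}"
    by auto
  then have "openin weak_star_topology {x. blinfun_apply x f \<in> U}"
    unfolding weak_star_topology_def by (rule topology_generated_by_Basis)
  then show "openin weak_star_topology {x \<in> topspace weak_star_topology. blinfun_apply x f \<in> U}"
    by simp
qed auto

lemma Hausdorff_space_weak_star_topology: "Hausdorff_space weak_star_topology"
  unfolding Hausdorff_space_def
proof (intro allI impI)
  fix x y :: "'f::real_normed_vector \<Rightarrow>\<^sub>L real"
  assume "x \<in> topspace weak_star_topology \<and> y \<in> topspace weak_star_topology \<and> x \<noteq> y"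
  then obtain f where "blinfun_apply x f \<noteq> blinfun_apply y f"
    using blinfun_eqI by metis
  then obtain U V where UV: "open U" "open V" "blinfun_apply x f \<in> U" "blinfun_apply y f \<in> V" "U \<inter> V = {}"
    using hausdorff by metis
  let ?pre = "\<lambda>W. {z \<in> topspace weak_star_topology. blinfun_apply z f \<in> W}"
  have "openin weak_star_topology (?pre W)" if "open W" for W
    using that continuous_map_weak_star_apply by (intro openin_continuous_map_preimage) auto
  with UV show "\<exists>U V. openin weak_star_topology U \<and> openin weak_star_topology V \<and> x \<in> U \<and> y \<in> V \<and> disjnt U V"
    by (intro exI[of _ "?pre U"] exI[of _ "?pre V"]) (auto simp: disjnt_def)
qed

theorem banach_steinhaus:
  fixes C :: "('a::banach \<Rightarrow>\<^sub>L 'b::real_normed_vector) set"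
  assumes pointwise: "\<And>f. bounded ((\<lambda>x. blinfun_apply x f) ` C)"
  shows "bounded C"
proof -
  define K where "K n = {f. \<forall>x\<in>C. norm (blinfun_apply x f) \<le> real n}" for n :: nat
  have closed_K: "closed (K n)" for n
  proof -
    have "K n = (\<Inter>x\<in>C. {f. norm (blinfun_apply x f) \<le> real n})"
      unfolding K_def by auto
    then show ?thesis
      by (auto intro!: closed_INT closed_Collect_le continuous_intros)
  qed
  have "\<Union>(range K) = UNIV"
  proof -
    have "f \<in> \<Union>(range K)" for f
    proof -
      obtain M where "\<forall>x\<in>C. norm (blinfun_apply x f) \<le> M"
        using pointwise[of f] by (auto simp: bounded_iff)
      moreover obtain n :: nat where "M \<le> real n"
        using real_arch_simple by blast
      ultimately have "f \<in> K n"
        unfolding K_def by force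
      then show ?thesis by blast
    qed
    then show ?thesis by blast
  qed
  then have "\<exists>n. interior (K n) \<noteq> {}"
    using Baire_category_alt[of euclidean "range K"] closed_K
    by (force simp: completely_metrizable_space_euclidean)
  then obtain n f0 r where r: "r > 0" "ball f0 r \<subseteq> K n"
    by (meson ex_in_conv open_contains_ball_eq open_interior interior_subset order_trans)
  have "norm x \<le> 4 * real n / r" if x: "x \<in> C" for x
  proof (rule norm_blinfun_bound)
    show "0 \<le> 4 * real n / r"
      using r by simp
    fix h
    show "norm (blinfun_apply x h) \<le> 4 * real n / r * norm h"
    proof (cases "h = 0")
      case False
      define c where "c = r / 2 / norm h"
      have "f0 + c *\<^sub>R h \<in> ball f0 r" "f0 \<in> ball f0 r"
        using False r by (auto simp: c_def dist_norm)
      then have "norm (blinfun_apply x (f0 + c *\<^sub>R h)) \<le> real n" "norm (blinfun_apply x f0) \<le> real n"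
        using r x unfolding K_def by blast+
      then have "c * norm (blinfun_apply x h) \<le> 2 * real n"
        using norm_triangle_ineq4[of "blinfun_apply x (f0 + c *\<^sub>R h)" "blinfun_apply x f0"] r False
        by (simp add: blinfun.add_right blinfun.scaleR_right c_def)
      then show ?thesis
        using r False by (simp add: c_def field_simps)
    qed simp
  qed
  then show ?thesis
    unfolding bounded_iff by blast
qed

lemma compactin_weak_star_imp_bounded:
  fixes C :: "('f::banach \<Rightarrow>\<^sub>L real) set"
  assumes "compactin weak_star_topology C"
  shows "bounded C"
proof (rule banach_steinhaus)
  fix f
  show "bounded ((\<lambda>x. blinfun_apply x f) ` C)"
    using image_compactin[OF assms continuous_map_weak_star_apply] by (simp add: compact_imp_bounded)
qed

section \<open>Firmly nonexpansive maps\<close>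

lemma firmly_nonexpansive_onD_half:
  assumes "firmly_nonexpansive_on C g" "x \<in> C" "y \<in> C"
  shows "2 * norm (g x - g y) \<le> norm ((x - y) + (g x - g y))"
proof -
  have "norm (g x - g y) \<le> norm ((1/2) *\<^sub>R (x - y) + (1 - 1/2) *\<^sub>R (g x - g y))"
    using assms unfolding firmly_nonexpansive_on_def by (metis field_sum_of_halves half_gt_zero_iff
        less_add_same_cancel1 zero_less_one)
  also have "\<dots> = norm ((x - y) + (g x - g y)) / 2"
    by (simp add: scaleR_right_distrib[symmetric])
  finally show ?thesis by simp
qed

lemma convex_bounded_above_imp_decseq:
  fixes L :: "nat \<Rightarrow> real"
  assumes convex: "\<And>k. 2 * L (Suc k) \<le> L (Suc (Suc k)) + L k"
    and bounded: "\<And>k. L k \<le> B"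
  shows "decseq L"
proof (rule decseq_SucI, rule ccontr)
  fix k
  assume "\<not> L (Suc k) \<le> L k"
  then have d: "L (Suc k) - L k > 0" by simp
  have growth: "L (Suc (k + n)) - L (k + n) \<ge> L (Suc k) - L k \<and> L (k + n) \<ge> L k + n * (L (Suc k) - L k)" for n
  proof (induction n)
    case (Suc n)
    then show ?case
      using convex[of "k + n"] by (simp add: algebra_simps)
  qed simp
  obtain n :: nat where "real n > (B - L k) / (L (Suc k) - L k)"
    using reals_Archimedean2 by blast
  then have "L k + n * (L (Suc k) - L k) > B"
    using d by (simp add: field_simps)
  then show False
    using growth[of n] bounded[of "k + n"] by simp
qed

lemma funpow_mem:
  assumes "g ` C \<subseteq> C" "z \<in> C"
  shows "(g ^^ k) z \<in> C"
  using assms by (induction k) auto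

definition displacement :: "('a::real_normed_vector \<Rightarrow> 'a) \<Rightarrow> 'a set \<Rightarrow> nat \<Rightarrow> real" where
  "displacement g D k = (SUP z\<in>D. norm (z - (g ^^ k) z))"

context
  fixes g :: "'a::real_normed_vector \<Rightarrow> 'a" and C :: "'a set"
  assumes bounded: "bounded C" and into: "g ` C \<subseteq> C"
begin

lemma displacement_upper:
  assumes "D \<subseteq> C" "z \<in> D"
  shows "norm (z - (g ^^ k) z) \<le> displacement g D k"
proof -
  have "norm (w - (g ^^ k) w) \<le> diameter C" if "w \<in> D" for w
    using diameter_bounded_bound[OF bounded] that assms(1) funpow_mem[OF into] by (auto simp: dist_norm)
  then show ?thesis
    unfolding displacement_def using assms(2) by (intro cSUP_upper bdd_aboveI2) auto
qed

lemma displacement_le_diameter: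
  assumes "D \<subseteq> C" "D \<noteq> {}"
  shows "displacement g D k \<le> diameter C"
  unfolding displacement_def using assms diameter_bounded_bound[OF bounded] funpow_mem[OF into]
  by (intro cSUP_least) (auto simp: dist_norm)

lemma displacement_mono:
  assumes "D \<subseteq> C" "D' \<subseteq> D" "D' \<noteq> {}"
  shows "displacement g D' k \<le> displacement g D k"
  unfolding displacement_def[of g D'] using assms
  by (intro cSUP_least) (auto intro: displacement_upper)

lemma displacement_midpoint:
  assumes firm: "firmly_nonexpansive_on C g" and D: "D \<subseteq> C" "D \<noteq> {}"
  shows "2 * displacement g (g ` D) (Suc k) \<le> displacement g D (Suc (Suc k)) + displacement g (g ` D) k"
proof -
  have gD: "g ` D \<subseteq> C"
    using D into by blast
  have bound: "2 * norm (w - (g ^^ Suc k) w) \<le> displacement g D (Suc (Suc k)) + displacement g (g ` D) k"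
    if "w \<in> g ` D" for w
  proof -
    obtain z where z: "z \<in> D" "w = g z"
      using \<open>w \<in> g ` D\<close> by blast
    have "2 * norm (w - (g ^^ Suc k) w) = 2 * norm (g z - g ((g ^^ Suc k) z))"
      by (simp add: z(2) funpow_swap1)
    also have "\<dots> \<le> norm ((z - (g ^^ Suc k) z) + (g z - g ((g ^^ Suc k) z)))"
      using firmly_nonexpansive_onD_half[OF firm] z(1) D funpow_mem[OF into] by blast
    also have "(z - (g ^^ Suc k) z) + (g z - g ((g ^^ Suc k) z)) = (z - (g ^^ Suc (Suc k)) z) + (w - (g ^^ k) w)"
      by (simp add: z(2) funpow_swap1)
    also have "norm \<dots> \<le> displacement g D (Suc (Suc k)) + displacement g (g ` D) k"
      using displacement_upper[OF D(1) z(1)] displacement_upper[OF gD that]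
      by (meson add_mono norm_triangle_ineq order_trans)
    finally show ?thesis .
  qed
  have "displacement g (g ` D) (Suc k) \<le> (displacement g D (Suc (Suc k)) + displacement g (g ` D) k) / 2"
    unfolding displacement_def[of g "g ` D" "Suc k"]
  proof (rule cSUP_least)
    fix w
    assume "w \<in> g ` D"
    then show "norm (w - (g ^^ Suc k) w) \<le> (displacement g D (Suc (Suc k)) + displacement g (g ` D) k) / 2"
      using bound by fastforce
  qed (use D in auto)
  then show ?thesis by simp
qed

end

theorem firmly_nonexpansive_fixes_core:
  fixes g :: "'a::real_normed_vector \<Rightarrow> 'a"
  assumes bounded: "bounded C" and into: "g ` C \<subseteq> C" and firm: "firmly_nonexpansive_on C g"
    and core: "\<And>n. x \<in> (g ^^ n) ` C"
  shows "g x = x"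
proof -
  define E where "E k i = displacement g ((g ^^ i) ` C) k" for k i
  have ranges: "(g ^^ i) ` C \<subseteq> C" "(g ^^ i) ` C \<noteq> {}" for i
    using funpow_mem[OF into] core[of i] by auto
  have nested: "(g ^^ Suc i) ` C = g ` (g ^^ i) ` C" for i
    by (simp add: image_comp)
  have E_nonneg: "0 \<le> E k i" for k i
    unfolding E_def using displacement_upper[OF bounded into ranges(1) core] norm_ge_zero order_trans by blast
  have "(g ^^ Suc i) ` C \<subseteq> (g ^^ i) ` C" for i
    using into by (auto simp: funpow_swap1)
  then have "decseq (E k)" for k
    unfolding E_def by (intro decseq_SucI displacement_mono[OF bounded into ranges(1)] ranges(2))
  then have "\<exists>l. E k \<longlonglongrightarrow> l" for k
    using decseq_convergent[of "E k" 0] E_nonneg by metis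
  then obtain L where L: "\<And>k. E k \<longlonglongrightarrow> L k"
    by metis
  have "E 0 = (\<lambda>_. 0)"
    using ranges(2) by (simp add: fun_eq_iff E_def displacement_def)
  then have "L 0 = 0"
    using L[of 0] by (simp add: LIMSEQ_const_iff)
  moreover have "decseq L"
  proof (rule convex_bounded_above_imp_decseq)
    fix k
    show "L k \<le> diameter C"
      using L[of k] displacement_le_diameter[OF bounded into ranges]
      by (intro LIMSEQ_le_const2) (auto simp: E_def)
    have "(\<lambda>i. 2 * E (Suc k) (Suc i)) \<longlonglongrightarrow> 2 * L (Suc k)"
      by (intro tendsto_mult_left LIMSEQ_Suc L)
    moreover have "(\<lambda>i. E (Suc (Suc k)) i + E k (Suc i)) \<longlonglongrightarrow> L (Suc (Suc k)) + L k"
      by (intro tendsto_add L LIMSEQ_Suc)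
    moreover have "2 * E (Suc k) (Suc i) \<le> E (Suc (Suc k)) i + E k (Suc i)" for i
      unfolding E_def nested using displacement_midpoint[OF bounded into firm ranges] .
    ultimately show "2 * L (Suc k) \<le> L (Suc (Suc k)) + L k"
      using LIMSEQ_le by blast
  qed
  moreover have "norm (x - g x) \<le> L 1"
    using L[of 1] displacement_upper[OF bounded into ranges(1) core, of 1]
    by (intro LIMSEQ_le_const) (auto simp: E_def)
  ultimately have "norm (x - g x) \<le> 0"
    using decseq_SucD[of L 0] by (metis One_nat_def order_trans)
  then show ?thesis
    by simp
qed

section \<open>States on compact spaces\<close>

definition state_on :: "'a topology \<Rightarrow> (('a \<Rightarrow> real) \<Rightarrow> real) \<Rightarrow> bool" where
  "state_on X \<phi> \<longleftrightarrow>
     (\<forall>h1 h2 a b. continuous_map X euclideanreal h1 \<longrightarrow> continuous_map X euclideanreal h2 \<longrightarrow>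
        \<phi> (\<lambda>y. a * h1 y + b * h2 y) = a * \<phi> h1 + b * \<phi> h2) \<and>
     (\<forall>h. continuous_map X euclideanreal h \<and> (\<forall>y\<in>topspace X. 0 \<le> h y) \<longrightarrow> 0 \<le> \<phi> h) \<and>
     \<phi> (\<lambda>_. 1) = 1"

text \<open>For closed A this says that the Radon measure representing \<phi> is supported in A.\<close>

definition concentrated_on :: "'a topology \<Rightarrow> (('a \<Rightarrow> real) \<Rightarrow> real) \<Rightarrow> 'a set \<Rightarrow> bool" where
  "concentrated_on X \<phi> A \<longleftrightarrow>
     (\<forall>h. continuous_map X euclideanreal h \<and> (\<forall>y\<in>topspace X. 0 \<le> h y) \<and> (\<forall>y\<in>A. h y = 0) \<longrightarrow> \<phi> h = 0)"

lemma state_on_linear: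
  "state_on X \<phi> \<Longrightarrow> continuous_map X euclideanreal h1 \<Longrightarrow> continuous_map X euclideanreal h2 \<Longrightarrow>
     \<phi> (\<lambda>y. a * h1 y + b * h2 y) = a * \<phi> h1 + b * \<phi> h2"
  unfolding state_on_def by blast

lemma state_on_nonneg:
  "state_on X \<phi> \<Longrightarrow> continuous_map X euclideanreal h \<Longrightarrow> (\<And>y. y \<in> topspace X \<Longrightarrow> 0 \<le> h y) \<Longrightarrow> 0 \<le> \<phi> h"
  unfolding state_on_def by blast

lemma state_on_add_const:
  assumes "state_on X \<phi>" "continuous_map X euclideanreal h"
  shows "\<phi> (\<lambda>y. h y + c) = \<phi> h + c"
proof -
  have "\<phi> (\<lambda>y. 1 * h y + c * 1) = 1 * \<phi> h + c * \<phi> (\<lambda>_. 1)"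
    by (rule state_on_linear[OF assms]) simp
  then show ?thesis
    using assms(1) by (simp add: state_on_def)
qed

lemma state_on_mono:
  assumes "state_on X \<phi>" "continuous_map X euclideanreal h1" "continuous_map X euclideanreal h2"
    and "\<And>y. y \<in> topspace X \<Longrightarrow> h1 y \<le> h2 y"
  shows "\<phi> h1 \<le> \<phi> h2"
proof -
  have c: "continuous_map X euclideanreal (\<lambda>y. 1 * h2 y + (-1) * h1 y)"
    using assms(2,3) by (intro continuous_map_add continuous_map_real_mult) auto
  have "0 \<le> \<phi> (\<lambda>y. 1 * h2 y + (-1) * h1 y)"
    using assms(4) by (intro state_on_nonneg[OF assms(1) c]) auto
  then show ?thesis
    using state_on_linear[OF assms(1,3,2), of 1 "-1"] by simp
qed

lemma state_on_eq_0:
  assumes "state_on X \<phi>" "continuous_map X euclideanreal h" "\<And>y. y \<in> topspace X \<Longrightarrow> h y = 0"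
  shows "\<phi> h = 0"
proof -
  have "\<phi> (\<lambda>_. 0) = 0"
    using state_on_linear[OF assms(1) assms(2) assms(2), of 0 0] by simp
  moreover have "\<phi> h \<le> \<phi> (\<lambda>_. 0)"
    by (rule state_on_mono[OF assms(1,2)]) (use assms(3) in auto)
  moreover have "\<phi> (\<lambda>_. 0) \<le> \<phi> h"
    by (rule state_on_mono[OF assms(1) _ assms(2)]) (use assms(3) in auto)
  ultimately show ?thesis
    by linarith
qed

lemma concentrated_onD:
  "concentrated_on X \<phi> A \<Longrightarrow> continuous_map X euclideanreal h \<Longrightarrow> (\<And>y. y \<in> topspace X \<Longrightarrow> 0 \<le> h y)
     \<Longrightarrow> (\<And>y. y \<in> A \<Longrightarrow> h y = 0) \<Longrightarrow> \<phi> h = 0"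
  unfolding concentrated_on_def by blast

lemma concentrated_on_nonempty:
  assumes "state_on X \<phi>" "concentrated_on X \<phi> A"
  shows "A \<noteq> {}"
proof
  assume "A = {}"
  then have "\<phi> (\<lambda>_. 1) = 0"
    using assms(2) unfolding concentrated_on_def by auto
  then show False
    using assms(1) by (simp add: state_on_def)
qed

text \<open>An Urysohn function separating the parts of A and B where h \<ge> \<epsilon> splits
  max (h - \<epsilon>) 0 into a function vanishing on B and one vanishing on A.\<close>

lemma concentrated_on_Int_approx:
  assumes \<phi>: "state_on X \<phi>" and normal: "normal_space X"
    and A: "closedin X A" "concentrated_on X \<phi> A" and B: "closedin X B" "concentrated_on X \<phi> B"
    and h: "continuous_map X euclideanreal h" "\<And>y. y \<in> topspace X \<Longrightarrow> 0 \<le> h y" "\<And>y. y \<in> A \<inter> B \<Longrightarrow> h y = 0"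
    and "\<epsilon> > 0"
  shows "\<phi> h \<le> \<epsilon>"
proof -
  define big where "big = {y \<in> topspace X. h y \<in> {\<epsilon>..}}"
  have "closedin X big"
    unfolding big_def by (rule closedin_continuous_map_preimage[OF h(1)]) auto
  moreover have "disjnt (big \<inter> B) (big \<inter> A)"
    using h(3) \<open>\<epsilon> > 0\<close> by (force simp: big_def disjnt_def)
  ultimately obtain u where u: "continuous_map X (top_of_set {0..1}) u" "u ` (big \<inter> B) \<subseteq> {0}" "u ` (big \<inter> A) \<subseteq> {1::real}"
    using Urysohn_lemma[OF normal, of "big \<inter> B" "big \<inter> A" 0 1] A(1) B(1) by (auto intro: closedin_Int)
  then have u_cont: "continuous_map X euclideanreal u" and u01: "\<And>y. y \<in> topspace X \<Longrightarrow> 0 \<le> u y \<and> u y \<le> 1"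
    by (auto simp: continuous_map_in_subtopology)
  define k where "k y = max (h y - \<epsilon>) 0" for y
  have k_cont: "continuous_map X euclideanreal k"
    unfolding k_def by (intro continuous_map_real_max continuous_map_diff h(1)) auto
  have k_vanish: "k y = 0" if "y \<in> topspace X" "y \<notin> big" for y
    using that by (auto simp: k_def big_def)
  have "\<phi> (\<lambda>y. k y * u y) = 0"
  proof (rule concentrated_onD[OF B(2)])
    show "continuous_map X euclideanreal (\<lambda>y. k y * u y)"
      by (intro continuous_map_real_mult k_cont u_cont)
  next
    fix y assume "y \<in> topspace X" then show "0 \<le> k y * u y"
      using u01 by (simp add: k_def)
  next
    fix y assume "y \<in> B" then show "k y * u y = 0"
      using k_vanish u(2) closedin_subset[OF B(1)] by (cases "y \<in> big") auto
  qed
  moreover have "\<phi> (\<lambda>y. k y * (1 - u y)) = 0"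
  proof (rule concentrated_onD[OF A(2)])
    show "continuous_map X euclideanreal (\<lambda>y. k y * (1 - u y))"
      by (intro continuous_map_real_mult continuous_map_diff k_cont u_cont) auto
  next
    fix y assume "y \<in> topspace X" then show "0 \<le> k y * (1 - u y)"
      using u01 by (simp add: k_def)
  next
    fix y assume "y \<in> A" then show "k y * (1 - u y) = 0"
      using k_vanish u(3) closedin_subset[OF A(1)] by (cases "y \<in> big") auto
  qed
  ultimately have "\<phi> k = 0"
    using state_on_linear[OF \<phi>, of "\<lambda>y. k y * u y" "\<lambda>y. k y * (1 - u y)" 1 1]
    by (simp add: algebra_simps continuous_map_real_mult continuous_map_diff k_cont u_cont)
  have "\<phi> h \<le> \<phi> (\<lambda>y. k y + \<epsilon>)"
    by (intro state_on_mono[OF \<phi> h(1)] continuous_map_add k_cont) (auto simp: k_def)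
  also have "\<dots> = \<epsilon>"
    using state_on_add_const[OF \<phi> k_cont] \<open>\<phi> k = 0\<close> by simp
  finally show ?thesis .
qed

lemma concentrated_on_Int:
  assumes "state_on X \<phi>" "normal_space X"
    and "closedin X A" "concentrated_on X \<phi> A" "closedin X B" "concentrated_on X \<phi> B"
  shows "concentrated_on X \<phi> (A \<inter> B)"
  unfolding concentrated_on_def
proof (intro allI impI)
  fix h
  assume h: "continuous_map X euclideanreal h \<and> (\<forall>y\<in>topspace X. 0 \<le> h y) \<and> (\<forall>y\<in>A \<inter> B. h y = 0)"
  then have "\<phi> h \<le> \<epsilon>" if "\<epsilon> > 0" for \<epsilon>
    using concentrated_on_Int_approx[OF assms, of h \<epsilon>] that by simp
  moreover have "0 \<le> \<phi> h"
    using h by (intro state_on_nonneg[OF assms(1)]) auto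
  ultimately show "\<phi> h = 0"
    using field_le_epsilon[of "\<phi> h" 0] by simp
qed

lemma compact_Hausdorff_concentrated_Inter_nonempty:
  assumes "compact_space X" "Hausdorff_space X" "state_on X \<phi>"
    and "\<And>A. A \<in> \<A> \<Longrightarrow> closedin X A \<and> concentrated_on X \<phi> A"
  shows "\<Inter>\<A> \<noteq> {}"
proof -
  have normal: "normal_space X"
    using assms(1,2) compact_Hausdorff_or_regular_imp_normal_space by blast
  have finite_Inter: "closedin X (\<Inter>\<F>) \<and> concentrated_on X \<phi> (\<Inter>\<F>)" if "finite \<F>" "\<F> \<noteq> {}" "\<F> \<subseteq> \<A>" for \<F>
    using that
  proof (induction \<F> rule: finite_ne_induct)
    case (insert A \<F>)
    then have "closedin X A" "concentrated_on X \<phi> A" "closedin X (\<Inter>\<F>)" "concentrated_on X \<phi> (\<Inter>\<F>)"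
      using assms(4) by auto
    then show ?case
      using concentrated_on_Int[OF assms(3) normal] by (simp add: closedin_Int)
  qed (use assms(4) in simp)
  have "\<Inter>\<F> \<noteq> {}" if "finite \<F>" "\<F> \<subseteq> \<A>" for \<F>
  proof (cases "\<F> = {}")
    case False
    then show ?thesis
      using finite_Inter[OF that(1) False that(2)] concentrated_on_nonempty[OF assms(3)] by blast
  qed simp
  moreover have "\<forall>A\<in>\<A>. closedin X A"
    using assms(4) by blast
  ultimately show ?thesis
    using assms(1)[unfolded compact_space_fip, rule_format, of \<A>] by blast
qed

section \<open>Invariant means and common points of ranges\<close>

lemma continuous_map_action_slice:
  assumes "continuous_map (prod_topology Y X) Z (\<lambda>(s, x). T s x)" "s \<in> topspace Y"
  shows "continuous_map X Z (T s)"
proof -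
  have "continuous_map X (prod_topology Y X) (\<lambda>x. (s, x))"
    using assms(2) by (intro continuous_map_pairedI) auto
  from continuous_map_compose[OF this assms(1)] show ?thesis
    by (simp add: o_def)
qed

lemma continuous_map_action_orbit:
  assumes "continuous_map (prod_topology Y X) Z (\<lambda>(s, x). T s x)" "x \<in> topspace X"
  shows "continuous_map Y Z (\<lambda>s. T s x)"
proof -
  have "continuous_map Y (prod_topology Y X) (\<lambda>s. (s, x))"
    using assms(2) by (intro continuous_map_pairedI) auto
  from continuous_map_compose[OF this assms(1)] show ?thesis
    by (simp add: o_def)
qed

lemma orbit_map_in_LUC:
  fixes T :: "'s::{semigroup_mult, topological_space} \<Rightarrow> 'a \<Rightarrow> 'a"
  assumes rep: "representation_on (topspace X) T"
    and cont: "continuous_map (prod_topology euclidean X) X (\<lambda>(s, x). T s x)"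
    and compact: "compact_space X" and x0: "x0 \<in> topspace X"
    and h: "continuous_map X euclideanreal h"
  shows "(\<lambda>s. h (T s x0)) \<in> LUC"
proof -
  have orbit_in: "T s x0 \<in> topspace X" for s
    using rep x0 unfolding representation_on_def by blast
  have "continuous_on UNIV (\<lambda>s. h (T s x0))"
    using continuous_map_compose[OF continuous_map_action_orbit[OF cont x0] h] by (simp add: o_def)
  moreover have "bounded (range (\<lambda>s. h (T s x0)))"
  proof -
    have "bounded (h ` topspace X)"
      using image_compactin[OF compact[unfolded compact_space_def] h] by (simp add: compact_imp_bounded)
    then show ?thesis
      by (rule bounded_subset) (use orbit_in in auto)
  qed
  moreover have "\<exists>U. open U \<and> s0 \<in> U \<and> (\<forall>s\<in>U. \<forall>t. \<bar>h (T (s * t) x0) - h (T (s0 * t) x0)\<bar> \<le> e)"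
    if "e > 0" for s0 e
  proof -
    define F where "F p = \<bar>h (T (fst p) (snd p)) - h (T s0 (snd p))\<bar>" for p
    have "continuous_map (prod_topology euclidean X) euclideanreal F"
    proof -
      have "continuous_map (prod_topology euclidean X) euclideanreal (\<lambda>p. h (T (fst p) (snd p)))"
        using continuous_map_compose[OF cont h] by (simp add: o_def case_prod_beta)
      moreover have "continuous_map (prod_topology euclidean X) euclideanreal (\<lambda>p. h (T s0 (snd p)))"
        using continuous_map_compose[OF continuous_map_compose[OF continuous_map_snd
              continuous_map_action_slice[OF cont]] h] by (simp add: o_def)
      ultimately show ?thesis
        unfolding F_def by (intro continuous_map_real_abs continuous_map_diff)
    qed
    define W where "W = {p \<in> topspace (prod_topology euclidean X). F p \<in> {..<e}}"
    have W: "openin (prod_topology euclidean X) W"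
      unfolding W_def by (rule openin_continuous_map_preimage) (use \<open>continuous_map _ _ F\<close> in auto)
    moreover have sub: "{s0} \<times> topspace X \<subseteq> W"
      using \<open>e > 0\<close> by (auto simp: W_def F_def)
    ultimately obtain U V where UV: "openin euclidean U" "s0 \<in> U" "topspace X \<subseteq> V" "U \<times> V \<subseteq> W"
      using tube_lemma_right[OF W compact[unfolded compact_space_def] _ sub] by auto
    have "\<bar>h (T (s * t) x0) - h (T (s0 * t) x0)\<bar> \<le> e" if "s \<in> U" for s t
    proof -
      have "(s, T t x0) \<in> U \<times> V"
        using that orbit_in UV(3) by blast
      then have "F (s, T t x0) < e"
        using UV(4) by (auto simp: W_def)
      then show ?thesis
        using rep x0 by (simp add: F_def representation_on_def)
    qed
    then show ?thesis
      using UV by auto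
  qed
  ultimately show ?thesis
    unfolding LUC_def by blast
qed

lemma left_amenable_invariant_state:
  fixes T :: "'s::{semigroup_mult, topological_space} \<Rightarrow> 'a \<Rightarrow> 'a"
  assumes "left_amenable TYPE('s)" and rep: "representation_on (topspace X) T"
    and cont: "continuous_map (prod_topology euclidean X) X (\<lambda>(s, x). T s x)"
    and compact: "compact_space X" and nonempty: "topspace X \<noteq> {}"
  obtains \<phi> where "state_on X \<phi>"
    and "\<And>s h. continuous_map X euclideanreal h \<Longrightarrow> \<phi> (\<lambda>y. h (T s y)) = \<phi> h"
proof -
  obtain \<mu> :: "('s \<Rightarrow> real) \<Rightarrow> real" where
    linear: "\<forall>f\<in>LUC. \<forall>g\<in>LUC. \<forall>a b. \<mu> (\<lambda>t. a * f t + b * g t) = a * \<mu> f + b * \<mu> g" and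
    bounded: "\<forall>f\<in>LUC. \<bar>\<mu> f\<bar> \<le> (SUP t. \<bar>f t\<bar>)" and
    normalized: "\<mu> (\<lambda>_. 1) = 1" and
    invariant: "\<forall>f\<in>LUC. \<forall>s. \<mu> (\<lambda>t. f (s * t)) = \<mu> f"
    using assms(1) unfolding left_amenable_def by blast
  obtain x0 where x0: "x0 \<in> topspace X"
    using nonempty by blast
  have orbit_in: "T s x0 \<in> topspace X" for s
    using rep x0 unfolding representation_on_def by blast
  note LUC = orbit_map_in_LUC[OF rep cont compact x0]
  define \<phi> where "\<phi> h = \<mu> (\<lambda>s. h (T s x0))" for h
  have "0 \<le> \<phi> h" if h: "continuous_map X euclideanreal h" "\<And>y. y \<in> topspace X \<Longrightarrow> 0 \<le> h y" for h
  proof -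
    have "bounded (h ` topspace X)"
      using image_compactin[OF compact[unfolded compact_space_def] h(1)] by (simp add: compact_imp_bounded)
    then obtain M where M: "\<And>y. y \<in> topspace X \<Longrightarrow> \<bar>h y\<bar> \<le> M"
      unfolding bounded_iff by auto
    have h': "continuous_map X euclideanreal (\<lambda>y. M * 1 + (-1) * h y)"
      using h(1) by (intro continuous_map_add continuous_map_real_mult) auto
    have "M - \<phi> h = \<phi> (\<lambda>y. M * 1 + (-1) * h y)"
      using linear[rule_format, OF LUC[of "\<lambda>_. 1"] LUC[OF h(1)], of M "-1"] normalized
      by (simp add: \<phi>_def)
    also have "\<dots> \<le> (SUP t. \<bar>M * 1 + (-1) * h (T t x0)\<bar>)"
      using bspec[OF bounded LUC[OF h']] unfolding \<phi>_def by (simp add: abs_le_iff)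
    also have "\<dots> \<le> M"
    proof (rule cSUP_least)
      fix t
      show "\<bar>M * 1 + (-1) * h (T t x0)\<bar> \<le> M"
        using M[OF orbit_in[of t]] h(2)[OF orbit_in[of t]] by auto
    qed simp
    finally show ?thesis by simp
  qed
  then have "state_on X \<phi>"
    unfolding state_on_def using linear LUC normalized by (simp add: \<phi>_def)
  moreover have "\<phi> (\<lambda>y. h (T s y)) = \<phi> h" if "continuous_map X euclideanreal h" for s h
  proof -
    have "(\<lambda>t. h (T s (T t x0))) = (\<lambda>t. h (T (s * t) x0))"
      using rep x0 by (simp add: representation_on_def)
    then show ?thesis
      using invariant[rule_format, OF LUC[OF that], of s] by (simp add: \<phi>_def)
  qed
  ultimately show ?thesis
    using that by blast
qed

lemma state_on_invariant_concentrated_on_image: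
  assumes \<phi>: "state_on X \<phi>" and f: "continuous_map X X f"
    and invariant: "\<And>h. continuous_map X euclideanreal h \<Longrightarrow> \<phi> (\<lambda>y. h (f y)) = \<phi> h"
  shows "concentrated_on X \<phi> (f ` topspace X)"
  unfolding concentrated_on_def
proof (intro allI impI)
  fix h
  assume h: "continuous_map X euclideanreal h \<and> (\<forall>y\<in>topspace X. 0 \<le> h y) \<and> (\<forall>y\<in>f ` topspace X. h y = 0)"
  have "continuous_map X euclideanreal (\<lambda>y. h (f y))"
    using continuous_map_compose[OF f, of euclideanreal h] h by (simp add: o_def)
  moreover have "h (f y) = 0" if "y \<in> topspace X" for y
    using h that by blast
  ultimately have "\<phi> (\<lambda>y. h (f y)) = 0"
    by (rule state_on_eq_0[OF \<phi>])
  then show "\<phi> h = 0"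
    using invariant h by simp
qed

theorem left_amenable_common_range_point:
  fixes T :: "'s::{semigroup_mult, topological_space} \<Rightarrow> 'a \<Rightarrow> 'a"
  assumes "left_amenable TYPE('s)" and rep: "representation_on (topspace X) T"
    and cont: "continuous_map (prod_topology euclidean X) X (\<lambda>(s, x). T s x)"
    and compact: "compact_space X" and Hausdorff: "Hausdorff_space X" and nonempty: "topspace X \<noteq> {}"
  shows "\<exists>x\<in>topspace X. \<forall>s. x \<in> T s ` topspace X"
proof -
  obtain \<phi> where \<phi>: "state_on X \<phi>"
    and invariant: "\<And>s h. continuous_map X euclideanreal h \<Longrightarrow> \<phi> (\<lambda>y. h (T s y)) = \<phi> h"
    using left_amenable_invariant_state[OF assms(1) rep cont compact nonempty] by blast
  have range_props: "closedin X (T s ` topspace X) \<and> concentrated_on X \<phi> (T s ` topspace X)" for s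
  proof -
    have T_s: "continuous_map X X (T s)"
      using continuous_map_action_slice[OF cont] by simp
    have "closedin X (T s ` topspace X)"
      using compactin_imp_closedin[OF Hausdorff image_compactin[OF compact[unfolded compact_space_def] T_s]] .
    moreover have "concentrated_on X \<phi> (T s ` topspace X)"
      using state_on_invariant_concentrated_on_image[OF \<phi> T_s invariant] .
    ultimately show ?thesis ..
  qed
  have "\<Inter>(range (\<lambda>s. T s ` topspace X)) \<noteq> {}"
    by (rule compact_Hausdorff_concentrated_Inter_nonempty[OF compact Hausdorff \<phi>]) (use range_props in blast)
  then obtain x where x: "\<And>s. x \<in> T s ` topspace X"
    by blast
  moreover have "T s ` topspace X \<subseteq> topspace X" for s
    using rep unfolding representation_on_def by blast
  ultimately show ?thesis
    by blast
qed

lemma comp_semigroup_fixed_point: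
  assumes "\<And>g. g \<in> G \<Longrightarrow> g x = x" "f \<in> comp_semigroup G"
  shows "f x = x"
  using assms(2) by (induction rule: comp_semigroup.induct) (auto simp: assms(1))

lemma representation_on_funpow:
  assumes rep: "representation_on C T" and g: "\<And>y. y \<in> C \<Longrightarrow> g y = T t y"
  shows "\<exists>s. \<forall>y\<in>C. (g ^^ Suc n) y = T s y"
proof (induction n)
  case (Suc n)
  then obtain s where "\<forall>y\<in>C. (g ^^ Suc n) y = T s y"
    by blast
  then have "\<forall>y\<in>C. (g ^^ Suc (Suc n)) y = T (t * s) y"
    using rep g unfolding representation_on_def by simp
  then show ?case
    by blast
qed (use g in auto)

lemma common_range_point_in_funpow_range:
  assumes "representation_on C T" "\<And>y. y \<in> C \<Longrightarrow> g y = T t y"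
    and "x \<in> C" "\<And>s. x \<in> T s ` C"
  shows "x \<in> (g ^^ n) ` C"
proof (cases n)
  case (Suc m)
  obtain s where "\<forall>y\<in>C. (g ^^ Suc m) y = T s y"
    using representation_on_funpow[OF assms(1,2)] by blast
  then have "(g ^^ n) ` C = T s ` C"
    unfolding Suc by (intro image_cong) auto
  then show ?thesis
    using assms(4) by simp
qed (use assms(3) in simp)

lemma restrict_range_eq_generator:
  assumes "(\<lambda>s. restrict (T s) C) ` UNIV = (\<lambda>g. restrict g C) ` comp_semigroup G" "g \<in> G"
  obtains t where "\<And>y. y \<in> C \<Longrightarrow> g y = T t y"
proof -
  have "restrict g C \<in> (\<lambda>s. restrict (T s) C) ` UNIV"
    unfolding assms(1) using assms(2) by (blast intro: comp_semigroup.gen)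
  then obtain t where t: "restrict (T t) C = restrict g C"
    by auto
  have "g y = T t y" if "y \<in> C" for y
    using fun_cong[OF t, of y] that by simp
  then show ?thesis
    using that by blast
qed

lemma restrict_range_eq_fixed_point:
  assumes "(\<lambda>s. restrict (T s) C) ` UNIV = (\<lambda>g. restrict g C) ` comp_semigroup G"
    and "x \<in> C" "\<And>g. g \<in> G \<Longrightarrow> g x = x"
  shows "T s x = x"
proof -
  have "restrict (T s) C \<in> (\<lambda>g. restrict g C) ` comp_semigroup G"
    unfolding assms(1)[symmetric] by blast
  then obtain f where f: "f \<in> comp_semigroup G" and eq: "restrict (T s) C = restrict f C"
    by blast
  have "T s x = f x"
    using fun_cong[OF eq, of x] assms(2) by simp
  also have "\<dots> = x"
    using assms(3) f by (rule comp_semigroup_fixed_point)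
  finally show ?thesis .
qed

theorem corollary3p12:
  fixes T :: "'s::{semigroup_mult, t2_space} \<Rightarrow> ('f::banach \<Rightarrow>\<^sub>L real) \<Rightarrow> ('f \<Rightarrow>\<^sub>L real)"
    and C :: "('f \<Rightarrow>\<^sub>L real) set"
  assumes "semitopological_semigroup TYPE('s)"
    and "left_amenable TYPE('s)"
    and "C \<noteq> {}"
    and "compactin weak_star_topology C"
    and "representation_on C T"
    and "\<exists>G. (\<forall>g\<in>G. (\<forall>x\<in>C. g x \<in> C) \<and> firmly_nonexpansive_on C g) \<and>
             (\<lambda>s. restrict (T s) C) ` UNIV = (\<lambda>g. restrict g C) ` comp_semigroup G"
    and "continuous_map (prod_topology euclidean (subtopology weak_star_topology C))
                        (subtopology weak_star_topology C) (\<lambda>(s, x). T s x)"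
  shows "\<exists>x\<in>C. \<forall>s. T s x = x"
proof -
  obtain G where G: "\<forall>g\<in>G. (\<forall>x\<in>C. g x \<in> C) \<and> firmly_nonexpansive_on C g"
    and range_eq: "(\<lambda>s. restrict (T s) C) ` UNIV = (\<lambda>g. restrict g C) ` comp_semigroup G"
    using assms(6) by blast
  \<comment> \<open>Joint continuity of the action already makes the orbit maps left uniformly continuous.\<close>
  have "\<exists>x\<in>topspace (subtopology weak_star_topology C). \<forall>s. x \<in> T s ` topspace (subtopology weak_star_topology C)"
    using assms(3,5) by (intro left_amenable_common_range_point[OF assms(2) _ assms(7)]
        compact_space_subtopology[OF assms(4)] Hausdorff_space_subtopology Hausdorff_space_weak_star_topology) simp_all
  then obtain x where "x \<in> C" and x: "\<And>s. x \<in> T s ` C"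
    by auto
  have "g x = x" if g: "g \<in> G" for g
  proof -
    obtain t where "\<And>y. y \<in> C \<Longrightarrow> g y = T t y"
      using restrict_range_eq_generator[OF range_eq g] by blast
    then show ?thesis
      using firmly_nonexpansive_fixes_core[OF compactin_weak_star_imp_bounded[OF assms(4)]] G g
        common_range_point_in_funpow_range[OF assms(5) _ \<open>x \<in> C\<close> x] by blast
  qed
  then show ?thesis
    using restrict_range_eq_fixed_point[OF range_eq \<open>x \<in> C\<close>] \<open>x \<in> C\<close> by blast
qed

end
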